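(* Let $m\ge1$, $0<\lambda_1\le\dots\le\lambda_m$, $0<\Lambda_0\le\Lambda_1$, and let $a,b$ be positive definite (symmetric) $m\times m$ matrices with $\Lambda_0I\le a,b\le\Lambda_1I$. Then for all $t>0$ and $w,w'\in\mathbb{R}^m$: $\|\widetilde a(t)-\widetilde b(t)\|\le\|\widetilde a(t)-\widetilde b(t)\|_s\le\|a-b\|_s$; $\|\widetilde A(t)-\widetilde B(t)\|\le\Lambda_0^{-2}\|a-b\|_s$; $|\langle w,(\widetilde A(t)-\widetilde B(t))w'\rangle|\le\Lambda_0^{-2}\|w\|\,\|w'\|\,\|a-b\|_s$.
   Context: $a(t)$ has entries $a_{ij}(1-e^{-(\lambda_i+\lambda_j)t})/(\lambda_i+\lambda_j)$; $g(t)$ is diagonal with $g_{ii}(t)=(1-e^{-2\lambda_it})/(2\lambda_i)$, $G(t)=g(t)^{-1}$; $\widetilde a(t)=G(t)^{1/2}a(t)G(t)^{1/2}$, $\widetilde A(t)=\widetilde a(t)^{-1}$; $b(t),\widetilde b(t),\widetilde B(t)$ analogously. $\|\cdot\|$ is the operator norm; $\|c\|_s=\max\{\sup_i\sum_j|c_{ij}|,\sup_j\sum_i|c_{ij}|\}$. *)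

theory Defs
  imports "HOL-Analysis.Analysis"
begin

text \<open>Matrices are real m x m matrices indexed by a finite linearly ordered type 'n
  (so m = CARD('n) >= 1).\<close>

definition amat :: "('n::finite \<Rightarrow> real) \<Rightarrow> real \<Rightarrow> real^'n^'n \<Rightarrow> real^'n^'n" where
  "amat lam t a = (\<chi> i j. a$i$j * (1 - exp (-(lam i + lam j) * t)) / (lam i + lam j))"

definition gmat :: "('n::finite \<Rightarrow> real) \<Rightarrow> real \<Rightarrow> real^'n^'n" where
  "gmat lam t = (\<chi> i j. if i = j then (1 - exp (-(2 * lam i) * t)) / (2 * lam i) else 0)"

definition Gmat :: "('n::finite \<Rightarrow> real) \<Rightarrow> real \<Rightarrow> real^'n^'n" where
  "Gmat lam t = matrix_inv (gmat lam t)"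

definition Gsqrt :: "('n::finite \<Rightarrow> real) \<Rightarrow> real \<Rightarrow> real^'n^'n" where
  "Gsqrt lam t = (\<chi> i j. if i = j then sqrt (Gmat lam t $ i $ i) else 0)"

definition atilde :: "('n::finite \<Rightarrow> real) \<Rightarrow> real \<Rightarrow> real^'n^'n \<Rightarrow> real^'n^'n" where
  "atilde lam t a = Gsqrt lam t ** amat lam t a ** Gsqrt lam t"

definition Atilde :: "('n::finite \<Rightarrow> real) \<Rightarrow> real \<Rightarrow> real^'n^'n \<Rightarrow> real^'n^'n" where
  "Atilde lam t a = matrix_inv (atilde lam t a)"

definition opnorm :: "real^'n^'n \<Rightarrow> real" where
  "opnorm M = onorm (\<lambda>x. M *v x)"

definition snorm :: "real^'n::finite^'n \<Rightarrow> real" where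
  "snorm c = max (Max (range (\<lambda>i. \<Sum>j\<in>UNIV. \<bar>c$i$j\<bar>))) (Max (range (\<lambda>j. \<Sum>i\<in>UNIV. \<bar>c$i$j\<bar>)))"

definition loewner_between :: "real \<Rightarrow> real^'n^'n \<Rightarrow> real \<Rightarrow> bool" where
  "loewner_between L0 a L1 \<longleftrightarrow> (\<forall>x. L0 * (x \<bullet> x) \<le> x \<bullet> (a *v x) \<and> x \<bullet> (a *v x) \<le> L1 * (x \<bullet> x))"

end

theory Submission
  imports Defs
begin

text \<open>
  With \<open>D(s) = diag (exp (-\<lambda>\<^sub>i s))\<close> one has \<open>a(t) = \<integral>\<^sub>0\<^sup>t D(s) a D(s) ds\<close>, so
  \<open>a(t)\<^sub>i\<^sub>j = a\<^sub>i\<^sub>j F\<^sub>i\<^sub>j\<close> and \<open>g(t) = diag F\<^sub>i\<^sub>i\<close> with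
  \<open>F\<^sub>i\<^sub>j = \<integral>\<^sub>0\<^sup>t exp (-(\<lambda>\<^sub>i + \<lambda>\<^sub>j) s) ds\<close>; hence the entries of the normalised matrix are
  \<open>a\<^sub>i\<^sub>j F\<^sub>i\<^sub>j / sqrt (F\<^sub>i\<^sub>i F\<^sub>j\<^sub>j)\<close>. Cauchy-Schwarz for the integral gives
  \<open>F\<^sub>i\<^sub>j\<^sup>2 \<le> F\<^sub>i\<^sub>i F\<^sub>j\<^sub>j\<close>, so the difference of the normalised matrices is dominated entrywise
  by \<open>a - b\<close>; the Schur norm is monotone under entrywise domination and bounds the operator
  norm (Schur test). The integral representation also carries the lower bound \<open>\<Lambda>\<^sub>0 I \<le> a\<close> over
  to the normalised matrix, whose inverse therefore has norm at most \<open>1/\<Lambda>\<^sub>0\<close>, and the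
  resolvent identity \<open>A\<^sup>-\<^sup>1 - B\<^sup>-\<^sup>1 = A\<^sup>-\<^sup>1 (B - A) B\<^sup>-\<^sup>1\<close> yields the bounds on the inverses.
\<close>

lemma matrix_inv_right:
  fixes A :: "'a::comm_ring_1^'n::finite^'n"
  assumes "invertible A"
  shows "A ** matrix_inv A = mat 1"
  using someI_ex[OF assms[unfolded invertible_def]] unfolding matrix_inv_def by blast

lemma matrix_inv_left:
  fixes A :: "'a::comm_ring_1^'n::finite^'n"
  assumes "invertible A"
  shows "matrix_inv A ** A = mat 1"
  using someI_ex[OF assms[unfolded invertible_def]] unfolding matrix_inv_def by blast

lemma matrix_inv_unique:
  fixes A B :: "'a::comm_ring_1^'n::finite^'n"
  assumes "A ** B = mat 1" "B ** A = mat 1"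
  shows "matrix_inv A = B"
proof -
  have "invertible A" using assms unfolding invertible_def by blast
  have "matrix_inv A = matrix_inv A ** (A ** B)" by (simp add: assms(1))
  also have "\<dots> = B" by (simp add: matrix_mul_assoc matrix_inv_left[OF \<open>invertible A\<close>])
  finally show ?thesis .
qed

definition diag_mat :: "('n::finite \<Rightarrow> 'a::semiring_1) \<Rightarrow> 'a^'n^'n" where
  "diag_mat d = (\<chi> i j. if i = j then d i else 0)"

lemma diag_mat_mult_left_nth: "(diag_mat d ** M) $ i $ j = d i * M $ i $ j"
  unfolding diag_mat_def matrix_matrix_mult_def
  by (simp add: if_distrib[where f="\<lambda>x. x * _"] cong: if_cong)

lemma diag_mat_mult_right_nth: "(M ** diag_mat d) $ i $ j = M $ i $ j * d j"
  unfolding diag_mat_def matrix_matrix_mult_def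
  by (simp add: if_distrib[where f="\<lambda>x. _ * x"] cong: if_cong)

lemma diag_mat_mult_vec: "diag_mat d *v x = (\<chi> i. d i * x $ i)"
  unfolding diag_mat_def matrix_vector_mult_def
  by (simp add: if_distrib[where f="\<lambda>x. x * _"] cong: if_cong)

lemma diag_mat_mult_diag_mat: "diag_mat d ** diag_mat e = diag_mat (\<lambda>i. d i * e i)"
  by (simp add: vec_eq_iff diag_mat_mult_left_nth) (simp add: diag_mat_def)

lemma diag_mat_one: "diag_mat (\<lambda>_. 1) = mat 1"
  by (simp add: diag_mat_def mat_def)

lemma matrix_inv_diag_mat:
  fixes d :: "'n::finite \<Rightarrow> 'a::field"
  assumes "\<And>i. d i \<noteq> 0"
  shows "matrix_inv (diag_mat d) = diag_mat (\<lambda>i. 1 / d i)"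
  by (rule matrix_inv_unique) (simp_all add: diag_mat_mult_diag_mat assms diag_mat_one)

lemma inner_diag_mat_congruence:
  fixes M :: "real^'n::finite^'n"
  shows "x \<bullet> ((diag_mat d ** M ** diag_mat d) *v x) = (diag_mat d *v x) \<bullet> (M *v (diag_mat d *v x))"
  unfolding diag_mat_mult_vec
  by (simp add: inner_vec_def matrix_vector_mult_def diag_mat_mult_left_nth diag_mat_mult_right_nth
      sum_distrib_left algebra_simps)

lemma row_sum_le_snorm: "(\<Sum>j\<in>UNIV. \<bar>c $ i $ j\<bar>) \<le> snorm (c::real^'n::finite^'n)"
  unfolding snorm_def by (rule order_trans[OF _ max.cobounded1]) (rule Max_ge, auto)

lemma column_sum_le_snorm: "(\<Sum>i\<in>UNIV. \<bar>c $ i $ j\<bar>) \<le> snorm (c::real^'n::finite^'n)"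
  unfolding snorm_def by (rule order_trans[OF _ max.cobounded2]) (rule Max_ge, auto)

lemma snorm_nonneg: "0 \<le> snorm (c::real^'n::finite^'n)"
  by (rule order_trans[OF _ row_sum_le_snorm]) (simp add: sum_nonneg)

lemma snorm_mono:
  fixes M N :: "real^'n::finite^'n"
  assumes "\<And>i j. \<bar>M $ i $ j\<bar> \<le> \<bar>N $ i $ j\<bar>"
  shows "snorm M \<le> snorm N"
proof -
  have "Max (range (\<lambda>i. \<Sum>j\<in>UNIV. \<bar>M $ i $ j\<bar>)) \<le> snorm N"
    by (subst Max_le_iff) (auto intro: order_trans[OF sum_mono row_sum_le_snorm] assms)
  moreover have "Max (range (\<lambda>j. \<Sum>i\<in>UNIV. \<bar>M $ i $ j\<bar>)) \<le> snorm N"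
    by (subst Max_le_iff) (auto intro: order_trans[OF sum_mono column_sum_le_snorm] assms)
  ultimately show ?thesis unfolding snorm_def[of M] by simp
qed

lemma snorm_minus_commute: "snorm (A - B) = snorm (B - A :: real^'n::finite^'n)"
  by (intro antisym snorm_mono) (simp_all add: abs_minus_commute)

lemma sum_mult_squared_le_weighted:
  fixes m y :: "'a \<Rightarrow> real"
  shows "(\<Sum>j\<in>A. m j * y j)\<^sup>2 \<le> (\<Sum>j\<in>A. \<bar>m j\<bar>) * (\<Sum>j\<in>A. \<bar>m j\<bar> * (y j)\<^sup>2)"
proof -
  have "\<bar>\<Sum>j\<in>A. m j * y j\<bar> \<le> (\<Sum>j\<in>A. sqrt \<bar>m j\<bar> * (sqrt \<bar>m j\<bar> * \<bar>y j\<bar>))"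
    by (rule order_trans[OF sum_abs]) (simp add: abs_mult flip: mult.assoc)
  then have "(\<Sum>j\<in>A. m j * y j)\<^sup>2 \<le> (\<Sum>j\<in>A. sqrt \<bar>m j\<bar> * (sqrt \<bar>m j\<bar> * \<bar>y j\<bar>))\<^sup>2"
    by (metis abs_ge_zero power2_abs power_mono)
  also have "\<dots> \<le> (\<Sum>j\<in>A. (sqrt \<bar>m j\<bar>)\<^sup>2) * (\<Sum>j\<in>A. (sqrt \<bar>m j\<bar> * \<bar>y j\<bar>)\<^sup>2)"
    by (rule Cauchy_Schwarz_ineq_sum)
  finally show ?thesis by (simp add: power_mult_distrib)
qed

text \<open>Schur test: weighting by \<open>\<bar>M\<^sub>i\<^sub>j\<bar>\<close> in Cauchy-Schwarz lets rows and columns each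
  contribute one factor \<open>snorm M\<close>.\<close>

lemma norm_mult_vec_le_snorm:
  fixes M :: "real^'n::finite^'n"
  shows "norm (M *v x) \<le> snorm M * norm x"
proof -
  let ?S = "snorm M"
  have "(norm (M *v x))\<^sup>2 = (\<Sum>i\<in>UNIV. ((M *v x) $ i)\<^sup>2)"
    unfolding power2_norm_eq_inner inner_vec_def by (simp add: power2_eq_square)
  also have "\<dots> \<le> (\<Sum>i\<in>UNIV. ?S * (\<Sum>j\<in>UNIV. \<bar>M $ i $ j\<bar> * (x $ j)\<^sup>2))"
  proof (rule sum_mono)
    fix i
    have "((M *v x) $ i)\<^sup>2 \<le> (\<Sum>j\<in>UNIV. \<bar>M $ i $ j\<bar>) * (\<Sum>j\<in>UNIV. \<bar>M $ i $ j\<bar> * (x $ j)\<^sup>2)"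
      unfolding matrix_vector_mult_def by (simp add: sum_mult_squared_le_weighted)
    also have "\<dots> \<le> ?S * (\<Sum>j\<in>UNIV. \<bar>M $ i $ j\<bar> * (x $ j)\<^sup>2)"
      by (rule mult_right_mono[OF row_sum_le_snorm]) (simp add: sum_nonneg)
    finally show "((M *v x) $ i)\<^sup>2 \<le> ?S * (\<Sum>j\<in>UNIV. \<bar>M $ i $ j\<bar> * (x $ j)\<^sup>2)" .
  qed
  also have "\<dots> = ?S * (\<Sum>j\<in>UNIV. (\<Sum>i\<in>UNIV. \<bar>M $ i $ j\<bar>) * (x $ j)\<^sup>2)"
  proof -
    have "(\<Sum>i\<in>UNIV. \<Sum>j\<in>UNIV. \<bar>M $ i $ j\<bar> * (x $ j)\<^sup>2)
        = (\<Sum>j\<in>UNIV. (\<Sum>i\<in>UNIV. \<bar>M $ i $ j\<bar>) * (x $ j)\<^sup>2)"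
      by (subst sum.swap) (simp add: sum_distrib_right)
    then show ?thesis by (simp add: sum_distrib_left[symmetric])
  qed
  also have "\<dots> \<le> ?S * (\<Sum>j\<in>UNIV. ?S * (x $ j)\<^sup>2)"
    by (intro mult_left_mono sum_mono mult_right_mono column_sum_le_snorm snorm_nonneg) auto
  also have "\<dots> = (?S * norm x)\<^sup>2"
    unfolding power_mult_distrib power2_norm_eq_inner inner_vec_def
    by (simp add: power2_eq_square sum_distrib_left algebra_simps)
  finally show ?thesis by (rule power2_le_imp_le) (simp add: snorm_nonneg)
qed

lemma opnorm_le_snorm: "opnorm M \<le> snorm (M :: real^'n::finite^'n)"
  unfolding opnorm_def by (rule onorm_le) (rule norm_mult_vec_le_snorm)

lemma coercive_matrix_invertible:
  fixes A :: "real^'n::finite^'n"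
  assumes L: "0 < L" and coercive: "\<And>x. L * (x \<bullet> x) \<le> x \<bullet> (A *v x)"
  shows "invertible A"
proof -
  have "x = 0" if "A *v x = 0" for x
  proof -
    have "L * (x \<bullet> x) \<le> 0" using coercive[of x] that by simp
    then have "x \<bullet> x \<le> 0" using L by (simp add: mult_le_0_iff)
    then show "x = 0" by (meson antisym inner_ge_zero inner_eq_zero_iff)
  qed
  then show ?thesis by (simp add: invertible_left_inverse matrix_left_invertible_ker)
qed

lemma norm_matrix_inv_coercive_le:
  fixes A :: "real^'n::finite^'n"
  assumes L: "0 < L" and coercive: "\<And>x. L * (x \<bullet> x) \<le> x \<bullet> (A *v x)"
  shows "norm (matrix_inv A *v y) \<le> norm y / L"
proof -
  let ?x = "matrix_inv A *v y"
  have "A *v ?x = y"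
    by (simp add: matrix_vector_mul_assoc matrix_inv_right[OF coercive_matrix_invertible[OF assms]])
  then have "L * (norm ?x)\<^sup>2 \<le> norm ?x * norm y"
    using coercive[of ?x] norm_cauchy_schwarz[of ?x y] by (simp add: power2_norm_eq_inner)
  then have "L * norm ?x \<le> norm y"
    by (cases "norm ?x = 0") (auto simp: power2_eq_square)
  then show ?thesis using L by (simp add: field_simps)
qed

lemma norm_matrix_inv_diff_le:
  fixes A B :: "real^'n::finite^'n"
  assumes L: "0 < L"
    and A: "\<And>x. L * (x \<bullet> x) \<le> x \<bullet> (A *v x)" and B: "\<And>x. L * (x \<bullet> x) \<le> x \<bullet> (B *v x)"
  shows "norm ((matrix_inv A - matrix_inv B) *v y) \<le> snorm (A - B) / L\<^sup>2 * norm y"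
proof -
  let ?A' = "matrix_inv A" and ?B' = "matrix_inv B"
  have A'A: "?A' *v (A *v z) = z" for z
    by (simp add: matrix_vector_mul_assoc matrix_inv_left[OF coercive_matrix_invertible[OF L A]])
  have BB': "B *v (?B' *v z) = z" for z
    by (simp add: matrix_vector_mul_assoc matrix_inv_right[OF coercive_matrix_invertible[OF L B]])
  have "(?A' - ?B') *v y = ?A' *v ((B - A) *v (?B' *v y))"
    by (simp add: algebra_simps A'A BB')
  then have "norm ((?A' - ?B') *v y) \<le> norm ((B - A) *v (?B' *v y)) / L"
    using norm_matrix_inv_coercive_le[OF L A] by simp
  also have "\<dots> \<le> snorm (A - B) * norm (?B' *v y) / L"
    using L norm_mult_vec_le_snorm[of "B - A"] by (intro divide_right_mono) (simp_all add: snorm_minus_commute)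
  also have "\<dots> \<le> snorm (A - B) * (norm y / L) / L"
    using L by (intro divide_right_mono mult_left_mono norm_matrix_inv_coercive_le[OF L B] snorm_nonneg)
      auto
  also have "\<dots> = snorm (A - B) / L\<^sup>2 * norm y" by (simp add: power2_eq_square field_simps)
  finally show ?thesis .
qed

subsection \<open>The integral representation of \<open>a(t)\<close>\<close>

text \<open>The weight \<open>F\<^sub>i\<^sub>j\<close>, i.e. \<open>\<integral>\<^sub>0\<^sup>t exp (-(\<lambda>\<^sub>i + \<lambda>\<^sub>j) s) ds\<close>.\<close>

definition decay_integral :: "('n \<Rightarrow> real) \<Rightarrow> real \<Rightarrow> 'n \<Rightarrow> 'n \<Rightarrow> real" where
  "decay_integral lam t i j = (1 - exp (- (lam i + lam j) * t)) / (lam i + lam j)"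

lemma amat_nth: "amat lam t c $ i $ j = c $ i $ j * decay_integral lam t i j"
  by (simp add: amat_def decay_integral_def)

lemma gmat_eq_diag_mat: "gmat lam t = diag_mat (\<lambda>i. decay_integral lam t i i)"
  by (simp add: vec_eq_iff gmat_def diag_mat_def decay_integral_def flip: mult_2)

lemma amat_one: "amat lam t (mat 1) = gmat lam t"
  by (simp add: vec_eq_iff amat_nth gmat_eq_diag_mat diag_mat_def mat_def)

lemma has_integral_exp_neg_mult:
  fixes c t :: real
  assumes c: "0 < c" and t: "0 \<le> t"
  shows "((\<lambda>s. exp (- c * s)) has_integral (1 - exp (- c * t)) / c) {0..t}"
proof -
  have "((\<lambda>s. - exp (- c * s) / c) has_vector_derivative exp (- c * x)) (at x within {0..t})" for x
    using c by (auto intro!: derivative_eq_intros simp flip: has_real_derivative_iff_has_vector_derivative)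
  from fundamental_theorem_of_calculus[OF t this] show ?thesis
    by (simp add: diff_divide_distrib)
qed

lemma has_integral_decay_integral:
  assumes "\<forall>i. 0 < lam i" "0 \<le> t"
  shows "((\<lambda>s. exp (- (lam i + lam j) * s)) has_integral decay_integral lam t i j) {0..t}"
  unfolding decay_integral_def using assms by (intro has_integral_exp_neg_mult add_pos_pos) auto

lemma decay_integral_pos:
  assumes "\<forall>i. 0 < lam i" "0 < t"
  shows "0 < decay_integral lam t i j"
proof -
  have "0 < lam i + lam j" using assms by (simp add: add_pos_pos)
  moreover from this have "exp (- (lam i + lam j) * t) < 1"
    using assms(2) by (simp add: mult_neg_pos)
  ultimately show ?thesis unfolding decay_integral_def by simp
qed

text \<open>Cauchy-Schwarz for the integral defining \<open>F\<^sub>i\<^sub>j\<close>, via the nonnegative integrand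
  \<open>(F\<^sub>i\<^sub>j exp (-\<lambda>\<^sub>i s) - F\<^sub>i\<^sub>i exp (-\<lambda>\<^sub>j s))\<^sup>2\<close>.\<close>

lemma decay_integral_squared_le:
  assumes lam: "\<forall>i. 0 < lam i" and t: "0 < t"
  shows "(decay_integral lam t i j)\<^sup>2 \<le> decay_integral lam t i i * decay_integral lam t j j"
proof -
  define F where "F = decay_integral lam t"
  let ?e = "\<lambda>k s. exp (- lam k * s)"
  have exp_sum: "exp (- (lam k + lam l) * s) = ?e k s * ?e l s" for k l s
    by (simp add: algebra_simps flip: exp_add)
  have integral: "((\<lambda>s. (F i j)\<^sup>2 * exp (- (lam i + lam i) * s) - (2 * F i i * F i j) * exp (- (lam i + lam j) * s)
             + (F i i)\<^sup>2 * exp (- (lam j + lam j) * s))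
        has_integral ((F i j)\<^sup>2 * F i i - (2 * F i i * F i j) * F i j + (F i i)\<^sup>2 * F j j)) {0..t}"
    unfolding F_def using lam t
    by (intro has_integral_add has_integral_diff has_integral_mult_right has_integral_decay_integral) auto
  have square: "(F i j)\<^sup>2 * exp (- (lam i + lam i) * s) - (2 * F i i * F i j) * exp (- (lam i + lam j) * s)
             + (F i i)\<^sup>2 * exp (- (lam j + lam j) * s) = (F i j * ?e i s - F i i * ?e j s)\<^sup>2" for s
    unfolding exp_sum by (simp add: power2_eq_square algebra_simps)
  have "0 \<le> (F i j)\<^sup>2 * F i i - (2 * F i i * F i j) * F i j + (F i i)\<^sup>2 * F j j"
    by (rule has_integral_nonneg[OF integral]) (simp only: square zero_le_power2)
  then have "0 \<le> F i i * (F i i * F j j - (F i j)\<^sup>2)" by (simp add: algebra_simps power2_eq_square)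
  moreover have "0 < F i i" unfolding F_def by (rule decay_integral_pos[OF lam t])
  ultimately show ?thesis unfolding F_def by (simp add: zero_le_mult_iff)
qed

lemma has_integral_inner_amat:
  fixes lam :: "'n::finite \<Rightarrow> real" and c :: "real^'n^'n" and x :: "real^'n"
  assumes "\<forall>i. 0 < lam i" "0 \<le> t"
  defines "y s \<equiv> diag_mat (\<lambda>i. exp (- lam i * s)) *v x"
  shows "((\<lambda>s. y s \<bullet> (c *v y s)) has_integral (x \<bullet> (amat lam t c *v x))) {0..t}"
proof -
  have "y s \<bullet> (c *v y s) = (\<Sum>i\<in>UNIV. \<Sum>j\<in>UNIV. (x $ i * c $ i $ j * x $ j) * exp (- (lam i + lam j) * s))"
    for s
    unfolding y_def diag_mat_mult_vec by (simp add: inner_vec_def matrix_vector_mult_def sum_distrib_left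
        algebra_simps flip: exp_add)
  moreover have "x \<bullet> (amat lam t c *v x)
      = (\<Sum>i\<in>UNIV. \<Sum>j\<in>UNIV. (x $ i * c $ i $ j * x $ j) * decay_integral lam t i j)"
    by (simp add: inner_vec_def matrix_vector_mult_def amat_nth sum_distrib_left algebra_simps)
  ultimately show ?thesis
    using assms by (simp only:) (intro has_integral_sum has_integral_mult_right
        has_integral_decay_integral; simp)
qed

lemma Gsqrt_eq_diag_mat:
  assumes "\<forall>i. 0 < lam i" "0 < t"
  shows "Gsqrt lam t = diag_mat (\<lambda>i. 1 / sqrt (decay_integral lam t i i))"
  using decay_integral_pos[OF assms]
  by (simp add: vec_eq_iff Gsqrt_def Gmat_def gmat_eq_diag_mat matrix_inv_diag_mat less_imp_neq[symmetric])
    (simp add: diag_mat_def real_sqrt_divide)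

lemma atilde_nth:
  assumes "\<forall>i. 0 < lam i" "0 < t"
  shows "atilde lam t c $ i $ j = c $ i $ j * (decay_integral lam t i j
           / sqrt (decay_integral lam t i i * decay_integral lam t j j))"
  by (simp add: atilde_def Gsqrt_eq_diag_mat[OF assms] diag_mat_mult_left_nth diag_mat_mult_right_nth
      amat_nth real_sqrt_mult)

lemma abs_atilde_diff_nth_le:
  assumes lam: "\<forall>i. 0 < lam i" and t: "0 < t"
  shows "\<bar>(atilde lam t a - atilde lam t b) $ i $ j\<bar> \<le> \<bar>(a - b) $ i $ j\<bar>"
proof -
  let ?F = "decay_integral lam t"
  define w where "w = ?F i j / sqrt (?F i i * ?F j j)"
  have "?F i j \<le> sqrt (?F i i * ?F j j)"
    by (rule real_le_rsqrt[OF decay_integral_squared_le[OF lam t]])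
  moreover have "0 < ?F i j" "0 < sqrt (?F i i * ?F j j)"
    using decay_integral_pos[OF lam t] by simp_all
  ultimately have "0 \<le> w" "w \<le> 1" unfolding w_def by simp_all
  moreover have "(atilde lam t a - atilde lam t b) $ i $ j = (a - b) $ i $ j * w"
    unfolding w_def by (simp only: atilde_nth[OF lam t] vector_minus_component left_diff_distrib)
  ultimately show ?thesis by (simp add: abs_mult mult_left_le)
qed

lemma snorm_atilde_diff_le:
  assumes "\<forall>i. 0 < lam i" "0 < t"
  shows "snorm (atilde lam t a - atilde lam t b) \<le> snorm (a - b)"
  by (rule snorm_mono) (rule abs_atilde_diff_nth_le[OF assms])

lemma atilde_coercive:
  fixes c :: "real^'n::finite^'n"
  assumes lam: "\<forall>i. 0 < lam i" and t: "0 < t"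
    and coercive: "\<And>x. L * (x \<bullet> x) \<le> x \<bullet> (c *v x)"
  shows "L * (x \<bullet> x) \<le> x \<bullet> (atilde lam t c *v x)"
proof -
  define d where "d i = 1 / sqrt (decay_integral lam t i i)" for i
  define y where "y = diag_mat d *v x"
  note integral = has_integral_inner_amat[OF lam less_imp_le[OF t], where x=y]
  have "x \<bullet> (atilde lam t c *v x) = y \<bullet> (amat lam t c *v y)"
    unfolding atilde_def Gsqrt_eq_diag_mat[OF lam t] y_def d_def by (rule inner_diag_mat_congruence)
  moreover have "L * (y \<bullet> (amat lam t (mat 1) *v y)) \<le> y \<bullet> (amat lam t c *v y)"
    using has_integral_le[OF has_integral_mult_right[OF integral] integral] coercive by simp
  moreover have "y \<bullet> (amat lam t (mat 1) *v y) = x \<bullet> x"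
    using decay_integral_pos[OF lam t] decay_integral_pos[OF lam t, THEN less_imp_neq, THEN not_sym]
    by (simp add: amat_one gmat_eq_diag_mat y_def d_def diag_mat_mult_vec inner_vec_def
        power2_eq_square[symmetric] power_mult_distrib power_divide less_imp_le)
  ultimately show ?thesis by simp
qed

theorem lemma4p5:
  fixes lam :: "'n::{finite,linorder} \<Rightarrow> real"
    and a b :: "real^'n::{finite,linorder}^'n::{finite,linorder}" and L0 L1 t :: real and w w' :: "real^'n::{finite,linorder}"
  assumes lam_pos: "\<forall>i. 0 < lam i"
    and lam_mono: "\<forall>i j. i \<le> j \<longrightarrow> lam i \<le> lam j"
    and L0: "0 < L0" and L01: "L0 \<le> L1"
    and a_sym: "transpose a = a" and b_sym: "transpose b = b"
    and a_bd: "loewner_between L0 a L1" and b_bd: "loewner_between L0 b L1"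
    and t: "0 < t"
  shows "opnorm (atilde lam t a - atilde lam t b) \<le> snorm (atilde lam t a - atilde lam t b)
       \<and> snorm (atilde lam t a - atilde lam t b) \<le> snorm (a - b)
       \<and> opnorm (Atilde lam t a - Atilde lam t b) \<le> snorm (a - b) / L0\<^sup>2
       \<and> \<bar>w \<bullet> ((Atilde lam t a - Atilde lam t b) *v w')\<bar> \<le> norm w * norm w' * snorm (a - b) / L0\<^sup>2"
proof -
  have coercive: "\<And>x. L0 * (x \<bullet> x) \<le> x \<bullet> (atilde lam t c *v x)" if "loewner_between L0 c L1" for c
    using that by (intro atilde_coercive[OF lam_pos t]) (simp add: loewner_between_def)
  have inv_diff: "norm ((Atilde lam t a - Atilde lam t b) *v y) \<le> snorm (a - b) / L0\<^sup>2 * norm y" for y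
    unfolding Atilde_def
    by (rule order_trans[OF norm_matrix_inv_diff_le[OF L0 coercive[OF a_bd] coercive[OF b_bd]]])
      (intro mult_right_mono divide_right_mono snorm_atilde_diff_le[OF lam_pos t]; simp)
  have "\<bar>w \<bullet> ((Atilde lam t a - Atilde lam t b) *v w')\<bar> \<le> norm w * (snorm (a - b) / L0\<^sup>2 * norm w')"
    by (rule order_trans[OF Cauchy_Schwarz_ineq2 mult_left_mono[OF inv_diff norm_ge_zero]])
  also have "\<dots> = norm w * norm w' * snorm (a - b) / L0\<^sup>2" by simp
  finally have inner_bound: "\<bar>w \<bullet> ((Atilde lam t a - Atilde lam t b) *v w')\<bar> \<le> \<dots>" .
  have opnorm_bound: "opnorm (Atilde lam t a - Atilde lam t b) \<le> snorm (a - b) / L0\<^sup>2"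
    unfolding opnorm_def by (rule onorm_le) (rule inv_diff)
  show ?thesis
    by (intro conjI opnorm_le_snorm snorm_atilde_diff_le[OF lam_pos t] opnorm_bound inner_bound)
qed

end
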